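(* Let $C>1$, $P$ a probability measure on $[0,\infty)$, and $\alpha>0$ such that $\alpha\,\mu_{P,C}\le\mathbb{E}_{t\sim P}\big[t\,\mathbf 1[t<m_P]\big]$. Then $G_{P,C}\big(\tfrac1Cm_P\big)\ge\alpha\,\mu_{P,C}$.
   Context: For $\mu\ge0$ define $G_{P,C}(\mu):=\mathbb{E}_{t\sim P}[\min\{t,C\mu\}]-\mu$. The $C$-clipped mean $\mu_{P,C}$ is the largest $\mu\ge0$ with $G_{P,C}(\mu)=0$. The $\frac1C$-median is $m_P:=\sup\{M\ge0:\mathbb{P}_{t\sim P}[t\ge M]\ge\frac1C\}$. (In the paper this is applied with $P=P_x$, the law of $\|\nabla L_\gamma(x)\|_2^2$, under the assumption that such an $\alpha=\alpha_C$ works uniformly for all $x\ne0$.) *)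

theory Defs
  imports "HOL-Probability.Probability"
begin

text \<open>Laws P of a nonnegative real random variable are modelled as real measures
  with prob_space P, sets P = sets borel and AE t in P. 0 <= t.\<close>

definition G_clip :: "real measure \<Rightarrow> real \<Rightarrow> real \<Rightarrow> real" where
  "G_clip P C \<mu> = (\<integral>t. min t (C * \<mu>) \<partial>P) - \<mu>"

definition clipped_mean :: "real measure \<Rightarrow> real \<Rightarrow> real" where
  "clipped_mean P C = (GREATEST \<mu>. 0 \<le> \<mu> \<and> G_clip P C \<mu> = 0)"

definition C_median :: "real measure \<Rightarrow> real \<Rightarrow> real" where
  "C_median P C = Sup {M. 0 \<le> M \<and> measure P {t. M \<le> t} \<ge> 1 / C}"

end

theory Submission
  imports Defs
begin

text \<open>Write \<open>m\<close> for the \<open>1/C\<close>-median. Clipping at \<open>C \<cdot> (m/C) = m\<close> splits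
  \<open>E[min t m]\<close> into the truncated mean \<open>E[t 1[t < m]]\<close> plus \<open>m \<cdot> P[t \<ge> m]\<close>. The supremum defining
  \<open>m\<close> is attained because \<open>a \<mapsto> P[t \<ge> a]\<close> is left-continuous, so \<open>P[t \<ge> m] \<ge> 1/C\<close>
  and the second term outweighs the shift \<open>m/C\<close> in \<open>G\<close>. Hence
  \<open>G(m/C) \<ge> E[t 1[t < m]] \<ge> \<alpha> \<mu>\<close>.\<close>

context real_distribution
begin

lemma measure_atLeast_eq_1_minus: "measure M {a..} = 1 - measure M {..<a}"
proof -
  have "{a..} = space M - {..<a}" by auto
  then show ?thesis using prob_compl[of "{..<a}"] by simp
qed

lemma measure_greaterThan_eq_1_minus_cdf: "measure M {a<..} = 1 - cdf M a"
proof -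
  have "{a<..} = space M - {..a}" by auto
  then show ?thesis using prob_compl[of "{..a}"] by (simp add: cdf_def2)
qed

lemma bdd_above_measure_atLeast_ge:
  assumes "c > 0"
  shows "bdd_above {a. c \<le> measure M {a..}}"
proof -
  have "\<forall>\<^sub>F x in at_top. 1 - c < cdf M x"
    using cdf_lim_at_top_prob assms by (intro order_tendstoD) auto
  then obtain b where b: "1 - c < cdf M b"
    by (auto simp: eventually_at_top_linorder)
  have "a \<le> b" if "c \<le> measure M {a..}" for a
  proof (rule ccontr)
    assume "\<not> a \<le> b"
    then have "measure M {a..} \<le> measure M {b<..}"
      by (intro finite_measure_mono) auto
    with b that show False
      by (simp add: measure_greaterThan_eq_1_minus_cdf)
  qed
  then show ?thesis by (auto simp: bdd_above_def)
qed

lemma measure_atLeast_ge_if_below: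
  assumes "\<And>a. a < b \<Longrightarrow> c \<le> measure M {a..}"
  shows "c \<le> measure M {b..}"
proof -
  have "cdf M a \<le> 1 - c" if "a < b" for a
  proof -
    have "c \<le> measure M {(a + b) / 2..}" using that by (intro assms) simp
    also have "\<dots> \<le> measure M {a<..}" using that by (intro finite_measure_mono) auto
    finally show ?thesis by (simp add: measure_greaterThan_eq_1_minus_cdf)
  qed
  then have "\<forall>\<^sub>F a in at_left b. cdf M a \<le> 1 - c"
    by (intro eventually_at_leftI[of "b - 1"]) auto
  then have "measure M {..<b} \<le> 1 - c"
    using cdf_at_left by (intro tendsto_upperbound) auto
  then show ?thesis by (simp add: measure_atLeast_eq_1_minus)
qed

lemma
  assumes "AE t in M. 0 \<le> t" and "C \<ge> 1"
  shows C_median_nonneg: "0 \<le> C_median M C"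
    and measure_atLeast_C_median_ge: "1 / C \<le> measure M {C_median M C..}"
proof -
  define S where "S = {a. 0 \<le> a \<and> 1 / C \<le> measure M {a..}}"
  have median_eq: "C_median M C = Sup S"
    by (simp add: C_median_def S_def atLeast_def)
  have "measure M {0..} = 1"
    using assms(1) by (simp add: prob_eq_1 atLeast_def)
  then have "0 \<in> S"
    using assms(2) by (simp add: S_def)
  moreover have "bdd_above {a. 1 / C \<le> measure M {a..}}"
    using assms(2) by (intro bdd_above_measure_atLeast_ge) simp
  then have "bdd_above S"
    by (rule bdd_above_mono) (auto simp: S_def)
  ultimately show "0 \<le> C_median M C"
    by (simp add: median_eq cSup_upper)
  show "1 / C \<le> measure M {C_median M C..}"
  proof (rule measure_atLeast_ge_if_below)
    fix a assume "a < C_median M C"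
    then obtain a' where "a' \<in> S" "a < a'"
      using less_cSup_iff[of S a] \<open>0 \<in> S\<close> \<open>bdd_above S\<close> by (auto simp: median_eq)
    then have "1 / C \<le> measure M {a'..}" by (simp add: S_def)
    also have "\<dots> \<le> measure M {a..}"
      using \<open>a < a'\<close> by (intro finite_measure_mono) auto
    finally show "1 / C \<le> measure M {a..}" .
  qed
qed

lemma integral_min_eq_truncated_plus_tail:
  assumes "AE t in M. 0 \<le> t" and "0 \<le> m"
  shows "(\<integral>t. min t m \<partial>M) = (\<integral>t. t * indicator {t. t < m} t \<partial>M) + m * measure M {m..}"
proof -
  have "AE t in M. norm (t * indicator {t. t < m} t) \<le> m"
    using assms(1) by eventually_elim (use assms(2) in \<open>auto simp: indicator_def\<close>)
  then have "integrable M (\<lambda>t. t * indicator {t. t < m} t)"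
    by (rule integrable_const_bound) simp
  moreover have "integrable M (\<lambda>t. m * indicator {m..} t)"
    by (intro integrable_mult_right integrable_real_indicator) (auto simp: less_top[symmetric])
  moreover have "(\<lambda>t. min t m) = (\<lambda>t. t * indicator {t. t < m} t + m * indicator {m..} t)"
    by (auto simp: indicator_def min_def)
  ultimately show ?thesis
    by simp
qed

end

theorem mainTheorem17:
  fixes P :: "real measure" and C \<alpha> :: real
  assumes "prob_space P" and "sets P = sets borel"
    and "AE t in P. 0 \<le> t"
    and "C > 1" and "\<alpha> > 0"
    and "\<alpha> * clipped_mean P C \<le> (\<integral>t. t * indicator {t. t < C_median P C} t \<partial>P)"
  shows "G_clip P C (C_median P C / C) \<ge> \<alpha> * clipped_mean P C"
proof -
  interpret real_distribution P
    using assms(1,2) by (simp add: real_distribution_def real_distribution_axioms_def)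
  define m where "m = C_median P C"
  have "0 \<le> m" and tail: "1 / C \<le> measure P {m..}"
    using assms(3,4) C_median_nonneg measure_atLeast_C_median_ge by (simp_all add: m_def)
  have "G_clip P C (m / C) = (\<integral>t. t * indicator {t. t < m} t \<partial>P) + m * measure P {m..} - m / C"
    using assms(3,4) \<open>0 \<le> m\<close> by (simp add: G_clip_def integral_min_eq_truncated_plus_tail)
  moreover have "m / C \<le> m * measure P {m..}"
    using mult_left_mono[OF tail \<open>0 \<le> m\<close>] by simp
  ultimately show ?thesis
    using assms(6) by (simp add: m_def)
qed

end
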